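(* For every $d\ge 2$, $$\mathsf{SR}+\mathsf{AxThExp}\not\models\neg\exists\mathsf{FTLBody}\quad\text{and}\quad\mathsf{SR}+\mathsf{AxThExp}\not\models\exists\mathsf{FTLBody};$$ that is, both $\mathsf{SR}+\mathsf{AxThExp}+\exists\mathsf{FTLBody}$ and $\mathsf{SR}+\mathsf{AxThExp}+\neg\exists\mathsf{FTLBody}$ have models (indeed with quantity part the ordered field of real numbers).
   Context: Language: two-sorted first-order language with sorts $B$ (bodies), $Q$ (quantities), unary $\mathsf{IOb}$ on $B$, binary $\mathsf{Ph}$ on $B$, operations $+,\cdot$ and relation $\le$ on $Q$, and $(d+2)$-ary $\mathsf{W}$ (first two arguments of sort $B$, rest of sort $Q$). $\Sigma\models\varphi$ means $\varphi$ holds in every model of $\Sigma$. $\mathsf{time}(\bar x,\bar y)=x_1-y_1$, $\mathsf{space}^2(\bar x,\bar y)=\sum_{i=2}^d(x_i-y_i)^2$. Write $\mathsf{ev}_m(\bar x)=\mathsf{ev}_k(\bar y)$ for $\forall b[\mathsf{W}(m,b,\bar x)\leftrightarrow\mathsf{W}(k,b,\bar y)]$. $\mathsf{SR}=\mathsf{SPR}^++\mathsf{AxLight}+\mathsf{AxOField}+\mathsf{AxEv}+\mathsf{AxSelf}+\mathsf{AxSymD}$, where: $\mathsf{SPR}^+$: for every formula $\varphi(h,\bar x)$ with at most one free variable $h$ of sort $B$, $\forall m k\bar x[\mathsf{IOb}(m)\land\mathsf{IOb}(k)\to(\varphi(m,\bar x)\leftrightarrow\varphi(k,\bar x))]$.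 $\mathsf{AxLight}$: $\exists m\,c\,[\mathsf{IOb}(m)\land c>0\land\forall\bar x\bar y\,(\exists p b[\mathsf{Ph}(p,b)\land\mathsf{W}(m,p,\bar x)\land\mathsf{W}(m,p,\bar y)]\leftrightarrow \mathsf{space}^2(\bar x,\bar y)=c^2\mathsf{time}(\bar x,\bar y)^2)]$. $\mathsf{AxOField}$: $\langle Q,+,\cdot,\le\rangle$ is an ordered field. $\mathsf{AxEv}$: $\mathsf{IOb}(m)\land\mathsf{IOb}(k)\to\exists\bar y\,\mathsf{ev}_m(\bar x)=\mathsf{ev}_k(\bar y)$. $\mathsf{AxSelf}$: $\mathsf{IOb}(m)\to\forall\bar x[\mathsf{W}(m,m,\bar x)\leftrightarrow x_2=\dots=x_d=0]$. $\mathsf{AxSymD}$: (i) if $\mathsf{IOb}(m),\mathsf{IOb}(k)$, $x_1=y_1$, $x'_1=y'_1$, $\mathsf{ev}_m(\bar x)=\mathsf{ev}_k(\bar x')$ and $\mathsf{ev}_m(\bar y)=\mathsf{ev}_k(\bar y')$, then $\mathsf{space}^2(\bar x,\bar y)=\mathsf{space}^2(\bar x',\bar y')$; (ii) $\mathsf{IOb}(m)\to\exists pb[\mathsf{Ph}(p,b)\land\mathsf{W}(m,p,0,\dots,0)\land\mathsf{W}(m,p,1,1,0,\dots,0)]$. Speed of light: $\mathsf{c}(m,v)$ is defined by $v>0\land\forall\bar x\bar y(\exists pb[\mathsf{Ph}(p,b)\land\mathsf{W}(m,p,\bar x)\land\mathsf{W}(m,p,\bar y)]\to\mathsf{space}^2(\bar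 x,\bar y)=v^2\mathsf{time}(\bar x,\bar y)^2)$; in models of $\mathsf{SR}$ it has a unique witness $\mathsf{c}_m$ for each inertial $m$. $\mathsf{AxThExp}$: $\exists h\,\mathsf{IOb}(h)\land\forall m\bar x\bar y\,(\mathsf{IOb}(m)\land\mathsf{space}^2(\bar x,\bar y)<\mathsf{c}_m^2\mathsf{time}(\bar x,\bar y)^2\to\exists k[\mathsf{IOb}(k)\land\mathsf{W}(m,k,\bar x)\land\mathsf{W}(m,k,\bar y)])$. $\exists\mathsf{FTLBody}$: $\exists m\,b\,\bar x\,\bar y\,[\mathsf{IOb}(m)\land\mathsf{W}(m,b,\bar x)\land\mathsf{W}(m,b,\bar y)\land\mathsf{space}^2(\bar x,\bar y)>\mathsf{c}_m^2\mathsf{time}(\bar x,\bar y)^2]$. *)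

theory Defs
  imports Main Complex_Main
begin

text \<open>
  Models of the two-sorted language: the quantity sort is the ordered field of
  real numbers (standard +, *, \<le>), so AxOField holds automatically.  A structure is given by
    IOb :: 'b \<Rightarrow> bool,  Ph :: 'b \<Rightarrow> 'b \<Rightarrow> bool,  W :: 'b \<Rightarrow> 'b \<Rightarrow> real list \<Rightarrow> bool,
  where the last argument of W is the d-tuple of coordinates (a list of length d;
  index 0 is time, indices 1..d-1 are space).  Only length-d lists are ever used.
\<close>

section \<open>Syntax and semantics of first-order formulas (needed for the SPR+ schema)\<close>

datatype qterm = QVar nat | QAdd qterm qterm | QMul qterm qterm

datatype form =
    FIOb nat
  | FPh nat nat
  | FW nat nat "qterm list"
  | FLe qterm qterm
  | FEqQ qterm qterm
  | FEqB nat nat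
  | FNot form
  | FAnd form form
  | FExB nat form
  | FExQ nat form

fun qeval :: "(nat \<Rightarrow> real) \<Rightarrow> qterm \<Rightarrow> real" where
  "qeval eQ (QVar n) = eQ n"
| "qeval eQ (QAdd s t) = qeval eQ s + qeval eQ t"
| "qeval eQ (QMul s t) = qeval eQ s * qeval eQ t"

fun sat :: "('b \<Rightarrow> bool) \<Rightarrow> ('b \<Rightarrow> 'b \<Rightarrow> bool) \<Rightarrow> ('b \<Rightarrow> 'b \<Rightarrow> real list \<Rightarrow> bool)
            \<Rightarrow> (nat \<Rightarrow> 'b) \<Rightarrow> (nat \<Rightarrow> real) \<Rightarrow> form \<Rightarrow> bool" where
  "sat IOb Ph W eB eQ (FIOb a) = IOb (eB a)"
| "sat IOb Ph W eB eQ (FPh a b) = Ph (eB a) (eB b)"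
| "sat IOb Ph W eB eQ (FW a b ts) = W (eB a) (eB b) (map (qeval eQ) ts)"
| "sat IOb Ph W eB eQ (FLe s t) = (qeval eQ s \<le> qeval eQ t)"
| "sat IOb Ph W eB eQ (FEqQ s t) = (qeval eQ s = qeval eQ t)"
| "sat IOb Ph W eB eQ (FEqB a b) = (eB a = eB b)"
| "sat IOb Ph W eB eQ (FNot \<phi>) = (\<not> sat IOb Ph W eB eQ \<phi>)"
| "sat IOb Ph W eB eQ (FAnd \<phi> \<psi>) = (sat IOb Ph W eB eQ \<phi> \<and> sat IOb Ph W eB eQ \<psi>)"
| "sat IOb Ph W eB eQ (FExB n \<phi>) = (\<exists>b. sat IOb Ph W (eB(n := b)) eQ \<phi>)"
| "sat IOb Ph W eB eQ (FExQ n \<phi>) = (\<exists>q. sat IOb Ph W eB (eQ(n := q)) \<phi>)"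

fun wf :: "nat \<Rightarrow> form \<Rightarrow> bool" where
  "wf d (FW a b ts) = (length ts = d)"
| "wf d (FNot \<phi>) = wf d \<phi>"
| "wf d (FAnd \<phi> \<psi>) = (wf d \<phi> \<and> wf d \<psi>)"
| "wf d (FExB n \<phi>) = wf d \<phi>"
| "wf d (FExQ n \<phi>) = wf d \<phi>"
| "wf d _ = True"

fun freeB :: "form \<Rightarrow> nat set" where
  "freeB (FIOb a) = {a}"
| "freeB (FPh a b) = {a, b}"
| "freeB (FW a b ts) = {a, b}"
| "freeB (FLe s t) = {}"
| "freeB (FEqQ s t) = {}"
| "freeB (FEqB a b) = {a, b}"
| "freeB (FNot \<phi>) = freeB \<phi>"
| "freeB (FAnd \<phi> \<psi>) = freeB \<phi> \<union> freeB \<psi>"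
| "freeB (FExB n \<phi>) = freeB \<phi> - {n}"
| "freeB (FExQ n \<phi>) = freeB \<phi>"

definition time :: "real list \<Rightarrow> real list \<Rightarrow> real" where
  "time x y = x ! 0 - y ! 0"

definition space2 :: "nat \<Rightarrow> real list \<Rightarrow> real list \<Rightarrow> real" where
  "space2 d x y = (\<Sum>i\<in>{1..<d}. (x ! i - y ! i)\<^sup>2)"

definition same_ev :: "('b \<Rightarrow> 'b \<Rightarrow> real list \<Rightarrow> bool) \<Rightarrow> 'b \<Rightarrow> real list \<Rightarrow> 'b \<Rightarrow> real list \<Rightarrow> bool" where
  "same_ev W m x k y = (\<forall>b. W m b x \<longleftrightarrow> W k b y)"

definition SPRplus :: "nat \<Rightarrow> ('b \<Rightarrow> bool) \<Rightarrow> ('b \<Rightarrow> 'b \<Rightarrow> bool) \<Rightarrow> ('b \<Rightarrow> 'b \<Rightarrow> real list \<Rightarrow> bool) \<Rightarrow> bool" where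
  "SPRplus d IOb Ph W =
    (\<forall>\<phi> h. wf d \<phi> \<and> freeB \<phi> \<subseteq> {h} \<longrightarrow>
       (\<forall>eB eQ m k. IOb m \<and> IOb k \<longrightarrow>
          (sat IOb Ph W (eB(h := m)) eQ \<phi> \<longleftrightarrow> sat IOb Ph W (eB(h := k)) eQ \<phi>)))"

definition AxLight :: "nat \<Rightarrow> ('b \<Rightarrow> bool) \<Rightarrow> ('b \<Rightarrow> 'b \<Rightarrow> bool) \<Rightarrow> ('b \<Rightarrow> 'b \<Rightarrow> real list \<Rightarrow> bool) \<Rightarrow> bool" where
  "AxLight d IOb Ph W =
    (\<exists>m c. IOb m \<and> c > 0 \<and>
      (\<forall>x y. length x = d \<and> length y = d \<longrightarrow>
         ((\<exists>p b. Ph p b \<and> W m p x \<and> W m p y) \<longleftrightarrow> space2 d x y = c\<^sup>2 * (time x y)\<^sup>2)))"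

definition AxEv :: "nat \<Rightarrow> ('b \<Rightarrow> bool) \<Rightarrow> ('b \<Rightarrow> 'b \<Rightarrow> real list \<Rightarrow> bool) \<Rightarrow> bool" where
  "AxEv d IOb W =
    (\<forall>m k x. IOb m \<and> IOb k \<and> length x = d \<longrightarrow> (\<exists>y. length y = d \<and> same_ev W m x k y))"

definition AxSelf :: "nat \<Rightarrow> ('b \<Rightarrow> bool) \<Rightarrow> ('b \<Rightarrow> 'b \<Rightarrow> real list \<Rightarrow> bool) \<Rightarrow> bool" where
  "AxSelf d IOb W =
    (\<forall>m. IOb m \<longrightarrow> (\<forall>x. length x = d \<longrightarrow> (W m m x \<longleftrightarrow> (\<forall>i\<in>{1..<d}. x ! i = 0))))"

definition AxSymD :: "nat \<Rightarrow> ('b \<Rightarrow> bool) \<Rightarrow> ('b \<Rightarrow> 'b \<Rightarrow> bool) \<Rightarrow> ('b \<Rightarrow> 'b \<Rightarrow> real list \<Rightarrow> bool) \<Rightarrow> bool" where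
  "AxSymD d IOb Ph W =
    ((\<forall>m k x y x' y'. IOb m \<and> IOb k \<and>
        length x = d \<and> length y = d \<and> length x' = d \<and> length y' = d \<and>
        x ! 0 = y ! 0 \<and> x' ! 0 = y' ! 0 \<and>
        same_ev W m x k x' \<and> same_ev W m y k y' \<longrightarrow>
        space2 d x y = space2 d x' y') \<and>
     (\<forall>m. IOb m \<longrightarrow>
        (\<exists>p b. Ph p b \<and> W m p (replicate d 0) \<and> W m p (1 # 1 # replicate (d - 2) 0))))"

definition SR :: "nat \<Rightarrow> ('b \<Rightarrow> bool) \<Rightarrow> ('b \<Rightarrow> 'b \<Rightarrow> bool) \<Rightarrow> ('b \<Rightarrow> 'b \<Rightarrow> real list \<Rightarrow> bool) \<Rightarrow> bool" where
  "SR d IOb Ph W =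
    (SPRplus d IOb Ph W \<and> AxLight d IOb Ph W \<and> AxEv d IOb W \<and> AxSelf d IOb W \<and> AxSymD d IOb Ph W)"
  \<comment> \<open>AxOField holds automatically since the quantity part is the real field.\<close>

text \<open>The formula c(m,v) and the speed of light c_m (its unique witness in models of SR).\<close>
definition is_c :: "nat \<Rightarrow> ('b \<Rightarrow> 'b \<Rightarrow> bool) \<Rightarrow> ('b \<Rightarrow> 'b \<Rightarrow> real list \<Rightarrow> bool) \<Rightarrow> 'b \<Rightarrow> real \<Rightarrow> bool" where
  "is_c d Ph W m v =
    (v > 0 \<and> (\<forall>x y. length x = d \<and> length y = d \<longrightarrow>
        (\<exists>p b. Ph p b \<and> W m p x \<and> W m p y) \<longrightarrow> space2 d x y = v\<^sup>2 * (time x y)\<^sup>2))"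

definition c_of :: "nat \<Rightarrow> ('b \<Rightarrow> 'b \<Rightarrow> bool) \<Rightarrow> ('b \<Rightarrow> 'b \<Rightarrow> real list \<Rightarrow> bool) \<Rightarrow> 'b \<Rightarrow> real" where
  "c_of d Ph W m = (THE v. is_c d Ph W m v)"

definition AxThExp :: "nat \<Rightarrow> ('b \<Rightarrow> bool) \<Rightarrow> ('b \<Rightarrow> 'b \<Rightarrow> bool) \<Rightarrow> ('b \<Rightarrow> 'b \<Rightarrow> real list \<Rightarrow> bool) \<Rightarrow> bool" where
  "AxThExp d IOb Ph W =
    ((\<exists>h. IOb h) \<and>
     (\<forall>m x y. IOb m \<and> length x = d \<and> length y = d \<and>
        space2 d x y < (c_of d Ph W m)\<^sup>2 * (time x y)\<^sup>2 \<longrightarrow>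
        (\<exists>k. IOb k \<and> W m k x \<and> W m k y)))"

definition ExFTLBody :: "nat \<Rightarrow> ('b \<Rightarrow> bool) \<Rightarrow> ('b \<Rightarrow> 'b \<Rightarrow> bool) \<Rightarrow> ('b \<Rightarrow> 'b \<Rightarrow> real list \<Rightarrow> bool) \<Rightarrow> bool" where
  "ExFTLBody d IOb Ph W =
    (\<exists>m b x y. IOb m \<and> length x = d \<and> length y = d \<and> W m b x \<and> W m b y \<and>
        space2 d x y > (c_of d Ph W m)\<^sup>2 * (time x y)\<^sup>2)"

end

theory Submission
  imports Defs
begin

text \<open>Both models live on \<open>\<real>\<^sup>d\<close> with the Poincare group as inertial observers, bodies with
  lightlike worldlines as photons, and post-composition with a Poincare map as a transitive group of
  automorphisms, which yields SPR+. AxThExp holds because the Poincare group moves the time axis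
  through any two timelike separated events. Admitting all bodies gives a model with a body moving
  along a spacelike line; admitting only bodies whose worldlines are causal gives a model without
  faster-than-light bodies.\<close>

section \<open>Minkowski space and the Poincare group\<close>

definition tuple :: "nat \<Rightarrow> (nat \<Rightarrow> real) \<Rightarrow> real list" where
  "tuple d f = map f [0..<d]"

lemma length_tuple [simp]: "length (tuple d f) = d"
  by (simp add: tuple_def)

lemma nth_tuple [simp]: "i < d \<Longrightarrow> tuple d f ! i = f i"
  by (simp add: tuple_def)

definition mink_form :: "nat \<Rightarrow> (nat \<Rightarrow> real) \<Rightarrow> (nat \<Rightarrow> real) \<Rightarrow> real" where
  "mink_form d f g = f 0 * g 0 - (\<Sum>i\<in>{1..<d}. f i * g i)"

definition mink_sq :: "nat \<Rightarrow> real list \<Rightarrow> real list \<Rightarrow> real" where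
  "mink_sq d x y = (time x y)\<^sup>2 - space2 d x y"

lemma mink_sq_eq_mink_form: "mink_sq d x y = mink_form d (\<lambda>i. x!i - y!i) (\<lambda>i. x!i - y!i)"
  by (simp add: mink_sq_def mink_form_def time_def space2_def power2_eq_square)

lemma mink_sq_commute: "mink_sq d x y = mink_sq d y x"
  by (simp add: mink_sq_def time_def space2_def power2_commute)

lemma mink_form_cong:
  "0 < d \<Longrightarrow> (\<And>i. i < d \<Longrightarrow> f i = f' i) \<Longrightarrow> (\<And>i. i < d \<Longrightarrow> g i = g' i) \<Longrightarrow>
   mink_form d f g = mink_form d f' g'"
  unfolding mink_form_def by (auto intro!: sum.cong)

lemma mink_form_commute: "mink_form d f g = mink_form d g f"
  unfolding mink_form_def by (simp add: mult.commute)

lemma mink_form_scale_left: "mink_form d (\<lambda>i. c * f i) g = c * mink_form d f g"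
  unfolding mink_form_def by (simp add: algebra_simps sum_distrib_left)

lemma mink_form_diff_left: "mink_form d (\<lambda>i. f i - g i) h = mink_form d f h - mink_form d g h"
  unfolding mink_form_def by (simp add: algebra_simps sum_subtractf)

lemma mink_form_diff_scale_self:
  "mink_form d (\<lambda>i. f i - c * g i) (\<lambda>i. f i - c * g i) =
   mink_form d f f - 2 * c * mink_form d f g + c\<^sup>2 * mink_form d g g"
  unfolding mink_form_def
  by (simp add: algebra_simps sum.distrib sum_distrib_left sum_subtractf power2_eq_square)

definition translate :: "(nat \<Rightarrow> real) \<Rightarrow> real list \<Rightarrow> real list" where
  "translate p x = tuple (length x) (\<lambda>i. x!i + p i)"

lemma length_translate [simp]: "length (translate p x) = length x"
  by (simp add: translate_def)

lemma translate_translate: "translate p (translate q x) = translate (\<lambda>i. p i + q i) x"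
  by (rule nth_equalityI) (simp_all add: translate_def)

lemma translate_zero: "translate (\<lambda>_. 0) x = x"
  by (rule nth_equalityI) (simp_all add: translate_def)

lemma bij_translate: "bij (translate p)"
  by (rule o_bij[where g = "translate (\<lambda>i. - p i)"])
    (simp_all add: fun_eq_iff translate_translate translate_zero)

lemma mink_sq_translate:
  assumes "length x = d" "length y = d"
  shows "mink_sq d (translate p x) (translate p y) = mink_sq d x y"
proof (cases "d = 0")
  case False
  then show ?thesis
    unfolding mink_sq_eq_mink_form using assms
    by (intro mink_form_cong) (simp_all add: translate_def)
qed (use assms in \<open>simp add: translate_def tuple_def\<close>)

definition refl_coeff :: "nat \<Rightarrow> (nat \<Rightarrow> real) \<Rightarrow> (nat \<Rightarrow> real) \<Rightarrow> real" where
  "refl_coeff d n f = 2 * mink_form d f n / mink_form d n n"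

definition reflect :: "nat \<Rightarrow> (nat \<Rightarrow> real) \<Rightarrow> real list \<Rightarrow> real list" where
  "reflect d n x = (if length x = d then tuple d (\<lambda>i. x!i - refl_coeff d n (nth x) * n i) else x)"

lemma length_reflect [simp]: "length (reflect d n x) = length x"
  by (simp add: reflect_def)

lemma nth_reflect:
  "length x = d \<Longrightarrow> i < d \<Longrightarrow> reflect d n x ! i = x!i - refl_coeff d n (nth x) * n i"
  by (simp add: reflect_def)

lemma refl_coeff_cong: "0 < d \<Longrightarrow> (\<And>i. i < d \<Longrightarrow> f i = f' i) \<Longrightarrow> refl_coeff d n f = refl_coeff d n f'"
  unfolding refl_coeff_def using mink_form_cong[of d f f' n n] by simp

lemma refl_coeff_diff_scale:
  "mink_form d n n \<noteq> 0 \<Longrightarrow> refl_coeff d n (\<lambda>i. f i - c * n i) = refl_coeff d n f - 2 * c"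
  unfolding refl_coeff_def by (simp add: mink_form_diff_left mink_form_scale_left field_simps)

lemma refl_coeff_scale: "refl_coeff d n (\<lambda>i. c * f i) = c * refl_coeff d n f"
  unfolding refl_coeff_def by (simp add: mink_form_scale_left)

lemma reflect_reflect:
  assumes "0 < d" "mink_form d n n \<noteq> 0"
  shows "reflect d n (reflect d n x) = x"
proof (cases "length x = d")
  case True
  let ?c = "refl_coeff d n (nth x)"
  have "refl_coeff d n (nth (reflect d n x)) = refl_coeff d n (\<lambda>i. x!i - ?c * n i)"
    using assms True by (intro refl_coeff_cong) (auto simp: nth_reflect)
  also have "\<dots> = - ?c"
    using refl_coeff_diff_scale[OF assms(2)] by simp
  finally show ?thesis
    using True by (intro nth_equalityI) (simp_all add: nth_reflect)
qed (simp add: reflect_def)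

lemma mink_sq_reflect:
  assumes "0 < d" "mink_form d n n \<noteq> 0" "length x = d" "length y = d"
  shows "mink_sq d (reflect d n x) (reflect d n y) = mink_sq d x y"
proof -
  let ?f = "\<lambda>i. x!i - y!i"
  let ?c = "refl_coeff d n (nth x) - refl_coeff d n (nth y)"
  have c: "?c * mink_form d n n = 2 * mink_form d ?f n"
    using assms(2) by (simp add: refl_coeff_def mink_form_diff_left field_simps)
  have "mink_sq d (reflect d n x) (reflect d n y) = mink_form d (\<lambda>i. ?f i - ?c * n i) (\<lambda>i. ?f i - ?c * n i)"
    unfolding mink_sq_eq_mink_form using assms
    by (intro mink_form_cong) (auto simp: nth_reflect algebra_simps)
  also have "\<dots> = mink_form d ?f ?f - ?c * (2 * mink_form d ?f n - ?c * mink_form d n n)"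
    unfolding mink_form_diff_scale_self by (simp add: algebra_simps power2_eq_square)
  also have "\<dots> = mink_form d ?f ?f"
    unfolding c by simp
  finally show ?thesis
    by (simp add: mink_sq_eq_mink_form)
qed

text \<open>That is, the reflection in \<open>u - v\<close> maps \<open>u\<close> to \<open>v\<close>.\<close>

lemma refl_coeff_swap:
  assumes "mink_form d u u = mink_form d v v" and "mink_form d (\<lambda>i. u i - v i) (\<lambda>i. u i - v i) \<noteq> 0"
  shows "refl_coeff d (\<lambda>i. u i - v i) u = 1"
proof -
  have "mink_form d (\<lambda>i. u i - v i) (\<lambda>i. u i - v i) = mink_form d u u - 2 * mink_form d u v + mink_form d v v"
    using mink_form_diff_scale_self[of d u 1 v] by simp
  also have "\<dots> = 2 * mink_form d u (\<lambda>i. u i - v i)"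
    using assms(1) mink_form_diff_left[of d u v u] mink_form_commute[of d u "\<lambda>i. u i - v i"]
      mink_form_commute[of d v u] by simp
  finally show ?thesis
    using assms(2) by (simp add: refl_coeff_def)
qed

definition poincare :: "nat \<Rightarrow> (real list \<Rightarrow> real list) set" where
  "poincare d = {g. bij g \<and> (\<forall>x. length (g x) = length x) \<and>
     (\<forall>x y. length x = d \<longrightarrow> length y = d \<longrightarrow> mink_sq d (g x) (g y) = mink_sq d x y)}"

lemma poincareI:
  "bij g \<Longrightarrow> (\<And>x. length (g x) = length x) \<Longrightarrow>
   (\<And>x y. length x = d \<Longrightarrow> length y = d \<Longrightarrow> mink_sq d (g x) (g y) = mink_sq d x y) \<Longrightarrow> g \<in> poincare d"
  by (simp add: poincare_def)

lemma poincare_bij: "g \<in> poincare d \<Longrightarrow> bij g"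
  by (simp add: poincare_def)

lemma length_poincare: "g \<in> poincare d \<Longrightarrow> length (g x) = length x"
  by (simp add: poincare_def)

lemma mink_sq_poincare:
  "g \<in> poincare d \<Longrightarrow> length x = d \<Longrightarrow> length y = d \<Longrightarrow> mink_sq d (g x) (g y) = mink_sq d x y"
  by (simp add: poincare_def)

lemma id_in_poincare: "(\<lambda>x. x) \<in> poincare d"
  by (rule poincareI) (simp_all add: bij_id[unfolded id_def])

lemma comp_in_poincare: "g \<in> poincare d \<Longrightarrow> h \<in> poincare d \<Longrightarrow> g \<circ> h \<in> poincare d"
  by (rule poincareI) (simp_all add: bij_comp poincare_bij mink_sq_poincare length_poincare)

lemma inv_in_poincare:
  assumes "g \<in> poincare d"
  shows "inv g \<in> poincare d"
proof -
  have g_inv: "g (inv g x) = x" for x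
    using assms by (simp add: poincare_bij bij_is_surj surj_f_inv_f)
  have len: "length (inv g x) = length x" for x
    using length_poincare[OF assms, of "inv g x"] by (simp add: g_inv)
  show ?thesis
  proof (rule poincareI)
    fix x y :: "real list" assume "length x = d" "length y = d"
    then show "mink_sq d (inv g x) (inv g y) = mink_sq d x y"
      using mink_sq_poincare[OF assms, of "inv g x" "inv g y"] by (simp add: len g_inv)
  qed (simp_all add: bij_imp_bij_inv[OF poincare_bij[OF assms]] len)
qed

lemma translate_in_poincare: "translate p \<in> poincare d"
  by (rule poincareI) (simp_all add: bij_translate mink_sq_translate)

lemma reflect_in_poincare: "0 < d \<Longrightarrow> mink_form d n n \<noteq> 0 \<Longrightarrow> reflect d n \<in> poincare d"
  by (rule poincareI) (simp_all add: involuntory_imp_bij reflect_reflect mink_sq_reflect)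

section \<open>Worldlines\<close>

definition time_axis :: "nat \<Rightarrow> real \<Rightarrow> real list" where
  "time_axis d t = t # replicate (d - 1) 0"

definition worldline :: "nat \<Rightarrow> (real list \<Rightarrow> real list) \<Rightarrow> real list set" where
  "worldline d b = range (\<lambda>t. b (time_axis d t))"

definition separations :: "nat \<Rightarrow> real list set \<Rightarrow> real set" where
  "separations d A = {mink_sq d u w | u w. u \<in> A \<and> w \<in> A \<and> length u = d \<and> length w = d}"

definition lightlike :: "nat \<Rightarrow> (real list \<Rightarrow> real list) \<Rightarrow> bool" where
  "lightlike d b \<longleftrightarrow> separations d (worldline d b) \<subseteq> {0}"

definition causal :: "nat \<Rightarrow> (real list \<Rightarrow> real list) \<Rightarrow> bool" where
  "causal d b \<longleftrightarrow> separations d (worldline d b) \<subseteq> {0..}"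

lemma mink_sq_in_separations:
  "u \<in> A \<Longrightarrow> w \<in> A \<Longrightarrow> length u = d \<Longrightarrow> length w = d \<Longrightarrow> mink_sq d u w \<in> separations d A"
  unfolding separations_def by blast

lemma length_time_axis [simp]: "0 < d \<Longrightarrow> length (time_axis d t) = d"
  by (simp add: time_axis_def)

lemma nth_time_axis: "i < d \<Longrightarrow> time_axis d t ! i = (if i = 0 then t else 0)"
  by (simp add: time_axis_def nth_Cons')

lemma in_range_time_axis_iff:
  assumes "0 < d" "length x = d"
  shows "x \<in> range (time_axis d) \<longleftrightarrow> (\<forall>i\<in>{1..<d}. x ! i = 0)"
proof
  assume "\<forall>i\<in>{1..<d}. x ! i = 0"
  then have "x = time_axis d (x ! 0)"
    using assms by (intro nth_equalityI) (auto simp: nth_time_axis)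
  then show "x \<in> range (time_axis d)" by blast
qed (auto simp: nth_time_axis)

lemma mink_sq_time_axis: "0 < d \<Longrightarrow> mink_sq d (time_axis d s) (time_axis d t) = (s - t)\<^sup>2"
  by (simp add: mink_sq_def time_def space2_def nth_time_axis)

lemma worldline_comp: "worldline d (g \<circ> b) = g ` worldline d b"
  by (auto simp: worldline_def)

lemma separations_poincare_image:
  assumes "g \<in> poincare d"
  shows "separations d (g ` A) = separations d A"
proof (intro equalityI subsetI)
  fix s assume "s \<in> separations d (g ` A)"
  then obtain u w where "u \<in> A" "w \<in> A" "length (g u) = d" "length (g w) = d" "s = mink_sq d (g u) (g w)"
    unfolding separations_def by blast
  then show "s \<in> separations d A"
    unfolding separations_def using mink_sq_poincare[OF assms] length_poincare[OF assms] by auto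
next
  fix s assume "s \<in> separations d A"
  then obtain u w where uw: "u \<in> A" "w \<in> A" "length u = d" "length w = d" "s = mink_sq d u w"
    unfolding separations_def by blast
  then have "s = mink_sq d (g u) (g w)" "length (g u) = d" "length (g w) = d"
    using mink_sq_poincare[OF assms] length_poincare[OF assms] by simp_all
  with uw show "s \<in> separations d (g ` A)"
    by (metis image_eqI mink_sq_in_separations)
qed

lemma lightlike_poincare_comp: "g \<in> poincare d \<Longrightarrow> lightlike d (g \<circ> b) \<longleftrightarrow> lightlike d b"
  by (simp add: lightlike_def worldline_comp separations_poincare_image)

lemma causal_poincare_comp: "g \<in> poincare d \<Longrightarrow> causal d (g \<circ> b) \<longleftrightarrow> causal d b"
  by (simp add: causal_def worldline_comp separations_poincare_image)

lemma lightlike_imp_causal: "lightlike d b \<Longrightarrow> causal d b"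
  by (auto simp: lightlike_def causal_def)

lemma causal_time_axis: "0 < d \<Longrightarrow> causal d (\<lambda>x. x)"
  by (auto simp: causal_def separations_def worldline_def mink_sq_time_axis)

lemma lightlike_const: "lightlike d (\<lambda>_. e)"
  by (auto simp: lightlike_def separations_def worldline_def mink_sq_def time_def space2_def)

definition line_through :: "nat \<Rightarrow> real list \<Rightarrow> real list \<Rightarrow> real list \<Rightarrow> real list" where
  "line_through d a b = (\<lambda>z. tuple d (\<lambda>i. a!i + z!0 * (b!i - a!i)))"

lemma worldline_line_through:
  "0 < d \<Longrightarrow> worldline d (line_through d a b) = range (\<lambda>t. tuple d (\<lambda>i. a!i + t * (b!i - a!i)))"
  by (simp add: worldline_def line_through_def nth_time_axis)

lemma in_worldline_line_through:
  assumes "0 < d" "length a = d" "length b = d"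
  shows "a \<in> worldline d (line_through d a b)" "b \<in> worldline d (line_through d a b)"
proof -
  have "a = tuple d (\<lambda>i. a!i + 0 * (b!i - a!i))" "b = tuple d (\<lambda>i. a!i + 1 * (b!i - a!i))"
    using assms by (simp_all add: nth_equalityI)
  then show "a \<in> worldline d (line_through d a b)" "b \<in> worldline d (line_through d a b)"
    unfolding worldline_line_through[OF assms(1)] by blast+
qed

lemma lightlike_line_through:
  assumes "0 < d" "mink_sq d a b = 0"
  shows "lightlike d (line_through d a b)"
proof -
  let ?point = "\<lambda>t. tuple d (\<lambda>i. a!i + t * (b!i - a!i))"
  have "mink_sq d (?point s) (?point t) = (s - t)\<^sup>2 * mink_sq d b a" for s t
  proof -
    have "mink_sq d (?point s) (?point t) =
          mink_form d (\<lambda>i. (s - t) * (b!i - a!i)) (\<lambda>i. (s - t) * (b!i - a!i))"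
      unfolding mink_sq_eq_mink_form using assms(1) by (intro mink_form_cong) (simp_all add: algebra_simps)
    also have "\<dots> = (s - t)\<^sup>2 * mink_sq d b a"
      using mink_form_commute[of d "\<lambda>i. b!i - a!i" "\<lambda>i. (s - t) * (b!i - a!i)"]
      by (simp add: mink_form_scale_left mink_sq_eq_mink_form power2_eq_square)
    finally show ?thesis .
  qed
  moreover have "mink_sq d b a = 0"
    using assms(2) mink_sq_commute by metis
  ultimately show ?thesis
    by (auto simp: lightlike_def separations_def worldline_line_through[OF assms(1)])
qed

text \<open>Follow the reflection exchanging \<open>(l, 0, ..., 0)\<close> with \<open>q - p\<close>, where \<open>l\<^sup>2\<close> is their common
  Minkowski norm, by the translation by \<open>p\<close>; choosing the sign of \<open>l\<close> opposite to that of the time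
  component of \<open>q - p\<close> keeps the reflection non-degenerate.\<close>

lemma timelike_on_observer_worldline:
  assumes "0 < d" "length p = d" "length q = d" "0 < mink_sq d q p"
  shows "\<exists>k\<in>poincare d. p \<in> worldline d k \<and> q \<in> worldline d k"
proof -
  define v where "v = (\<lambda>i. q!i - p!i)"
  define l where "l = (if 0 < v 0 then - sqrt (mink_sq d q p) else sqrt (mink_sq d q p))"
  define u where "u = (\<lambda>i::nat. if i = 0 then l else 0)"
  define n where "n = (\<lambda>i. u i - v i)"
  have vv: "mink_form d v v = mink_sq d q p"
    by (simp add: v_def mink_sq_eq_mink_form)
  have "mink_form d v v \<le> (v 0)\<^sup>2"
    unfolding mink_form_def by (simp add: power2_eq_square[symmetric] sum_nonneg)
  then have "v 0 \<noteq> 0"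
    using vv assms(4) by auto
  then have l_v0: "l * v 0 < 0"
    using assms(4) by (auto simp: l_def mult_less_0_iff)
  then have "l \<noteq> 0"
    by auto
  have uu: "mink_form d u u = l\<^sup>2"
    by (simp add: u_def mink_form_def power2_eq_square)
  have uv: "mink_form d u v = l * v 0"
    by (simp add: u_def mink_form_def)
  have l2: "l\<^sup>2 = mink_sq d q p"
    using assms(4) by (simp add: l_def)
  have "mink_form d n n = 2 * l\<^sup>2 - 2 * (l * v 0)"
    using mink_form_diff_scale_self[of d u 1 v] by (simp add: n_def uu uv vv l2)
  then have nn: "mink_form d n n \<noteq> 0"
    using l_v0 zero_le_power2[of l] by linarith
  have coeff: "refl_coeff d n u = 1"
    unfolding n_def by (rule refl_coeff_swap) (use uu vv l2 nn in \<open>simp_all add: n_def\<close>)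
  define k where "k = translate (nth p) \<circ> reflect d n"
  have k_time_axis: "k (time_axis d t) = tuple d (\<lambda>i. p!i + (t / l) * v i)" for t
  proof -
    have "refl_coeff d n (nth (time_axis d t)) = refl_coeff d n (\<lambda>i. (t / l) * u i)"
      using assms(1) \<open>l \<noteq> 0\<close> by (intro refl_coeff_cong) (simp_all add: nth_time_axis u_def)
    also have "\<dots> = t / l"
      unfolding refl_coeff_scale coeff by simp
    finally show ?thesis
      using assms(1) \<open>l \<noteq> 0\<close>
      by (intro nth_equalityI) (auto simp: k_def translate_def nth_reflect nth_time_axis n_def u_def field_simps)
  qed
  have "p = k (time_axis d 0)" "q = k (time_axis d l)"
    using assms(2,3) \<open>l \<noteq> 0\<close> by (simp_all add: k_time_axis v_def nth_equalityI)
  moreover have "k \<in> poincare d"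
    unfolding k_def by (intro comp_in_poincare translate_in_poincare reflect_in_poincare assms(1) nn)
  ultimately show ?thesis
    unfolding worldline_def by blast
qed

section \<open>Automorphisms and the speed of light\<close>

lemma sat_cong_freeB:
  "(\<And>n. n \<in> freeB \<phi> \<Longrightarrow> eB n = eB' n) \<Longrightarrow> sat IOb Ph W eB eQ \<phi> = sat IOb Ph W eB' eQ \<phi>"
proof (induction \<phi> arbitrary: eB eB' eQ)
  case (FNot \<phi>)
  have "sat IOb Ph W eB eQ \<phi> = sat IOb Ph W eB' eQ \<phi>"
    by (rule FNot.IH) (use FNot.prems in auto)
  then show ?case by simp
next
  case (FAnd \<phi> \<psi>)
  have "sat IOb Ph W eB eQ \<phi> = sat IOb Ph W eB' eQ \<phi>"
    by (rule FAnd.IH(1)) (use FAnd.prems in auto)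
  moreover have "sat IOb Ph W eB eQ \<psi> = sat IOb Ph W eB' eQ \<psi>"
    by (rule FAnd.IH(2)) (use FAnd.prems in auto)
  ultimately show ?case by simp
next
  case (FExB n \<phi>)
  have "sat IOb Ph W (eB(n := b)) eQ \<phi> = sat IOb Ph W (eB'(n := b)) eQ \<phi>" for b
    by (rule FExB.IH) (use FExB.prems in auto)
  then show ?case by simp
next
  case (FExQ n \<phi>)
  have "sat IOb Ph W eB (eQ(n := q)) \<phi> = sat IOb Ph W eB' (eQ(n := q)) \<phi>" for q
    by (rule FExQ.IH) (use FExQ.prems in auto)
  then show ?case by simp
qed auto

definition automorphism ::
  "('b \<Rightarrow> bool) \<Rightarrow> ('b \<Rightarrow> 'b \<Rightarrow> bool) \<Rightarrow> ('b \<Rightarrow> 'b \<Rightarrow> real list \<Rightarrow> bool) \<Rightarrow> ('b \<Rightarrow> 'b) \<Rightarrow> bool" where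
  "automorphism IOb Ph W \<sigma> \<longleftrightarrow> bij \<sigma> \<and> (\<forall>b. IOb (\<sigma> b) = IOb b) \<and>
     (\<forall>a b. Ph (\<sigma> a) (\<sigma> b) = Ph a b) \<and> (\<forall>a b x. W (\<sigma> a) (\<sigma> b) x = W a b x)"

lemma sat_automorphism:
  assumes "automorphism IOb Ph W \<sigma>"
  shows "sat IOb Ph W (\<sigma> \<circ> eB) eQ \<phi> = sat IOb Ph W eB eQ \<phi>"
proof (induction \<phi> arbitrary: eB eQ)
  case (FEqB a b)
  then show ?case
    using assms by (simp add: automorphism_def bij_def inj_eq)
next
  case (FExB n \<phi>)
  have "(\<exists>b. sat IOb Ph W ((\<sigma> \<circ> eB)(n := b)) eQ \<phi>) = (\<exists>b. sat IOb Ph W ((\<sigma> \<circ> eB)(n := \<sigma> b)) eQ \<phi>)"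
    using assms unfolding automorphism_def by (metis bij_pointE)
  also have "\<dots> = (\<exists>b. sat IOb Ph W (\<sigma> \<circ> eB(n := b)) eQ \<phi>)"
    by (simp only: fun_upd_comp)
  also have "\<dots> = (\<exists>b. sat IOb Ph W (eB(n := b)) eQ \<phi>)"
    by (simp only: FExB.IH)
  finally show ?case
    by (simp only: sat.simps)
qed (use assms in \<open>auto simp: automorphism_def\<close>)

lemma SPRplus_if_transitive_automorphisms:
  assumes "\<And>m k. IOb m \<Longrightarrow> IOb k \<Longrightarrow> \<exists>\<sigma>. automorphism IOb Ph W \<sigma> \<and> \<sigma> m = k"
  shows "SPRplus d IOb Ph W"
  unfolding SPRplus_def
proof (intro allI impI)
  fix \<phi> h eB eQ m k
  assume free: "wf d \<phi> \<and> freeB \<phi> \<subseteq> {h}" and "IOb m \<and> IOb k"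
  then obtain \<sigma> where \<sigma>: "automorphism IOb Ph W \<sigma>" "\<sigma> m = k"
    using assms by blast
  have "sat IOb Ph W (eB(h := k)) eQ \<phi> = sat IOb Ph W (\<sigma> \<circ> eB(h := m)) eQ \<phi>"
    by (rule sat_cong_freeB) (use free \<sigma>(2) in auto)
  also have "\<dots> = sat IOb Ph W (eB(h := m)) eQ \<phi>"
    by (rule sat_automorphism[OF \<sigma>(1)])
  finally show "sat IOb Ph W (eB(h := m)) eQ \<phi> = sat IOb Ph W (eB(h := k)) eQ \<phi>"
    by simp
qed

lemma space2_origin_diagonal: "2 \<le> d \<Longrightarrow> space2 d (replicate d 0) (1 # 1 # replicate (d - 2) 0) = 1"
proof -
  assume "2 \<le> d"
  then have "space2 d (replicate d 0) (1 # 1 # replicate (d - 2) 0) = (\<Sum>i\<in>{1..<d}. if i = 1 then 1 else 0)"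
    unfolding space2_def by (intro sum.cong) (auto simp: nth_Cons')
  also have "\<dots> = 1"
    using \<open>2 \<le> d\<close> by simp
  finally show ?thesis .
qed

lemma time_origin_diagonal: "2 \<le> d \<Longrightarrow> time (replicate d 0) (1 # 1 # replicate (d - 2) 0) = -1"
  by (simp add: time_def)

lemma is_c_imp_eq_1:
  assumes "AxSymD d IOb Ph W" "2 \<le> d" "IOb m" "is_c d Ph W m v"
  shows "v = 1"
proof -
  let ?o = "replicate d (0::real)" and ?e = "1 # 1 # replicate (d - 2) (0::real)"
  obtain p b where "Ph p b" "W m p ?o" "W m p ?e"
    using assms(1,3) unfolding AxSymD_def by blast
  moreover have "length ?o = d" "length ?e = d"
    using assms(2) by simp_all
  ultimately have "space2 d ?o ?e = v\<^sup>2 * (time ?o ?e)\<^sup>2"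
    using assms(4) unfolding is_c_def by blast
  then have "v\<^sup>2 = 1"
    using assms(2) by (simp add: space2_origin_diagonal time_origin_diagonal)
  moreover have "0 < v"
    using assms(4) unfolding is_c_def by blast
  ultimately show "v = 1"
    using power2_eq_1_iff by force
qed

lemma c_of_eq_1:
  assumes "AxSymD d IOb Ph W" "2 \<le> d" "IOb m" "is_c d Ph W m 1"
  shows "c_of d Ph W m = 1"
  unfolding c_of_def using assms by (blast intro: the_equality is_c_imp_eq_1)

section \<open>The models\<close>

text \<open>An inertial observer \<open>m\<close> is a Poincare map read as a coordinate system: coordinates \<open>x\<close>
  name the event \<open>m x\<close>. A body \<open>b\<close> is any map, its worldline being the image of the time axis;
  \<open>admissible\<close> selects the bodies that exist.\<close>

definition inertial :: "nat \<Rightarrow> (real list \<Rightarrow> real list) \<Rightarrow> bool" where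
  "inertial d m \<longleftrightarrow> m \<in> poincare d"

definition photon :: "nat \<Rightarrow> (real list \<Rightarrow> real list) \<Rightarrow> (real list \<Rightarrow> real list) \<Rightarrow> bool" where
  "photon d p b \<longleftrightarrow> lightlike d p"

definition sees ::
  "nat \<Rightarrow> ((real list \<Rightarrow> real list) \<Rightarrow> bool) \<Rightarrow> (real list \<Rightarrow> real list) \<Rightarrow> (real list \<Rightarrow> real list) \<Rightarrow> real list \<Rightarrow> bool"
  where "sees d admissible m b x \<longleftrightarrow> admissible b \<and> m x \<in> worldline d b"

locale poincare_model =
  fixes d :: nat and admissible :: "(real list \<Rightarrow> real list) \<Rightarrow> bool"
  assumes two_le_dim: "2 \<le> d"
    and admissible_poincare_comp: "g \<in> poincare d \<Longrightarrow> admissible (g \<circ> b) \<longleftrightarrow> admissible b"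
    and admissible_time_axis: "admissible (\<lambda>x. x)"
    and admissible_lightlike: "lightlike d b \<Longrightarrow> admissible b"
begin

lemma dim_pos: "0 < d"
  using two_le_dim by simp

lemma admissible_poincare: "g \<in> poincare d \<Longrightarrow> admissible g"
  using admissible_poincare_comp[of g "\<lambda>x. x"] admissible_time_axis by (simp add: comp_def)

lemma sees_const: "sees d admissible m (\<lambda>_. m x) x"
  using admissible_lightlike[OF lightlike_const] by (simp add: sees_def worldline_def)

lemma light_ray_through:
  assumes "length a = d" "length b = d" "mink_sq d a b = 0"
  shows "\<exists>p. lightlike d p \<and> admissible p \<and> a \<in> worldline d p \<and> b \<in> worldline d p"
  using lightlike_line_through[OF dim_pos assms(3)] admissible_lightlike
    in_worldline_line_through[OF dim_pos assms(1,2)] by blast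

lemma automorphism_poincare_comp:
  assumes "g \<in> poincare d"
  shows "automorphism (inertial d) (photon d) (sees d admissible) ((\<circ>) g)"
  unfolding automorphism_def
proof (intro conjI allI)
  have "bij g"
    using assms by (rule poincare_bij)
  then have inv_g: "inv g (g x) = x" "g (inv g x) = x" for x
    by (simp_all add: bij_is_inj bij_is_surj inv_f_f surj_f_inv_f)
  show "bij ((\<circ>) g)"
    by (rule o_bij[where g = "(\<circ>) (inv g)"]) (simp_all add: fun_eq_iff inv_g)
  fix a b :: "real list \<Rightarrow> real list" and x :: "real list"
  have "inv g \<circ> (g \<circ> b) = b"
    by (simp add: fun_eq_iff inv_g)
  then show "inertial d (g \<circ> b) = inertial d b"
    unfolding inertial_def using assms comp_in_poincare inv_in_poincare by metis
  show "photon d (g \<circ> a) (g \<circ> b) = photon d a b"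
    using assms by (simp add: photon_def lightlike_poincare_comp)
  show "sees d admissible (g \<circ> a) (g \<circ> b) x = sees d admissible a b x"
    using assms \<open>bij g\<close>
    by (simp add: sees_def admissible_poincare_comp worldline_comp bij_is_inj inj_image_mem_iff)
qed

lemma SPRplus: "SPRplus d (inertial d) (photon d) (sees d admissible)"
proof (rule SPRplus_if_transitive_automorphisms)
  fix m k assume "inertial d m" "inertial d k"
  then have "k \<circ> inv m \<in> poincare d" "(k \<circ> inv m) \<circ> m = k"
    unfolding inertial_def
    by (simp_all add: comp_in_poincare inv_in_poincare o_assoc bij_is_inj poincare_bij)
  then show "\<exists>\<sigma>. automorphism (inertial d) (photon d) (sees d admissible) \<sigma> \<and> \<sigma> m = k"
    using automorphism_poincare_comp by blast
qed

lemma photon_separation: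
  assumes "photon d p b" "sees d admissible m p x" "sees d admissible m p y" "inertial d m"
    "length x = d" "length y = d"
  shows "mink_sq d x y = 0"
proof -
  have "mink_sq d (m x) (m y) \<in> separations d (worldline d p)"
    using assms(2-6) by (simp add: mink_sq_in_separations length_poincare sees_def inertial_def)
  then have "mink_sq d (m x) (m y) = 0"
    using assms(1) unfolding photon_def lightlike_def by blast
  then show ?thesis
    using assms(4-6) mink_sq_poincare unfolding inertial_def by simp
qed

lemma AxLight: "AxLight d (inertial d) (photon d) (sees d admissible)"
  unfolding AxLight_def
proof (intro exI conjI allI impI)
  show "inertial d (\<lambda>x. x)" "(0::real) < 1"
    by (simp_all add: inertial_def id_in_poincare)
  fix x y :: "real list" assume len: "length x = d \<and> length y = d"
  show "(\<exists>p b. photon d p b \<and> sees d admissible (\<lambda>x. x) p x \<and> sees d admissible (\<lambda>x. x) p y) \<longleftrightarrow>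
        space2 d x y = 1\<^sup>2 * (time x y)\<^sup>2"
  proof
    assume "\<exists>p b. photon d p b \<and> sees d admissible (\<lambda>x. x) p x \<and> sees d admissible (\<lambda>x. x) p y"
    then have "mink_sq d x y = 0"
      using len photon_separation[where m = "\<lambda>x. x"] by (metis inertial_def id_in_poincare)
    then show "space2 d x y = 1\<^sup>2 * (time x y)\<^sup>2"
      by (simp add: mink_sq_def)
  next
    assume "space2 d x y = 1\<^sup>2 * (time x y)\<^sup>2"
    then obtain p where "lightlike d p" "admissible p" "x \<in> worldline d p" "y \<in> worldline d p"
      using len light_ray_through[of x y] by (auto simp: mink_sq_def)
    then show "\<exists>p b. photon d p b \<and> sees d admissible (\<lambda>x. x) p x \<and> sees d admissible (\<lambda>x. x) p y"
      by (auto simp: photon_def sees_def)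
  qed
qed

lemma AxEv: "AxEv d (inertial d) (sees d admissible)"
  unfolding AxEv_def
proof (intro allI impI)
  fix m k and x :: "real list" assume "inertial d m \<and> inertial d k \<and> length x = d"
  then have m: "m \<in> poincare d" and k: "k \<in> poincare d" and len: "length x = d"
    by (simp_all add: inertial_def)
  have "length (inv k (m x)) = d"
    using len length_poincare[OF m] length_poincare[OF inv_in_poincare[OF k]] by simp
  moreover have "k (inv k (m x)) = m x"
    using poincare_bij[OF k] by (simp add: bij_is_surj surj_f_inv_f)
  ultimately show "\<exists>y. length y = d \<and> same_ev (sees d admissible) m x k y"
    unfolding same_ev_def sees_def by metis
qed

lemma AxSelf: "AxSelf d (inertial d) (sees d admissible)"
  unfolding AxSelf_def
proof (intro allI impI)
  fix m and x :: "real list" assume "inertial d m" "length x = d"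
  then have m: "m \<in> poincare d" and len: "length x = d"
    by (simp_all add: inertial_def)
  have "sees d admissible m m x \<longleftrightarrow> x \<in> range (time_axis d)"
    using admissible_poincare[OF m] bij_is_inj[OF poincare_bij[OF m]]
    by (auto simp: sees_def worldline_def inj_eq)
  also have "\<dots> \<longleftrightarrow> (\<forall>i\<in>{1..<d}. x ! i = 0)"
    using dim_pos len by (rule in_range_time_axis_iff)
  finally show "sees d admissible m m x \<longleftrightarrow> (\<forall>i\<in>{1..<d}. x ! i = 0)" .
qed

lemma same_ev_imp_same_event:
  assumes "same_ev (sees d admissible) m x k y"
  shows "k y = m x"
proof -
  have "sees d admissible k (\<lambda>_. m x) y"
    using assms sees_const[of m x] unfolding same_ev_def by blast
  then show ?thesis
    by (simp add: sees_def worldline_def)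
qed

lemma AxSymD: "AxSymD d (inertial d) (photon d) (sees d admissible)"
  unfolding AxSymD_def
proof (intro conjI allI impI)
  fix m k and x y x' y' :: "real list"
  assume "inertial d m \<and> inertial d k \<and> length x = d \<and> length y = d \<and> length x' = d \<and> length y' = d \<and>
    x ! 0 = y ! 0 \<and> x' ! 0 = y' ! 0 \<and>
    same_ev (sees d admissible) m x k x' \<and> same_ev (sees d admissible) m y k y'"
  then have m: "m \<in> poincare d" and k: "k \<in> poincare d" and len: "length x = d" "length y = d"
    "length x' = d" "length y' = d" and simultaneous: "x ! 0 = y ! 0" "x' ! 0 = y' ! 0"
    and "k x' = m x" "k y' = m y"
    by (simp_all add: inertial_def same_ev_imp_same_event)
  then have "mink_sq d x' y' = mink_sq d x y"
    using mink_sq_poincare[OF k, of x' y'] mink_sq_poincare[OF m, of x y] by simp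
  then show "space2 d x y = space2 d x' y'"
    using simultaneous by (simp add: mink_sq_def time_def)
next
  fix m assume "inertial d m"
  then have m: "m \<in> poincare d"
    by (simp add: inertial_def)
  let ?o = "replicate d (0::real)" and ?e = "1 # 1 # replicate (d - 2) (0::real)"
  have len: "length ?o = d" "length ?e = d"
    using two_le_dim by simp_all
  have "mink_sq d (m ?o) (m ?e) = 0"
    using mink_sq_poincare[OF m len] two_le_dim
    by (simp add: mink_sq_def space2_origin_diagonal time_origin_diagonal)
  then obtain p where "lightlike d p" "admissible p" "m ?o \<in> worldline d p" "m ?e \<in> worldline d p"
    using light_ray_through length_poincare[OF m] len by metis
  then show "\<exists>p b. photon d p b \<and> sees d admissible m p ?o \<and> sees d admissible m p ?e"
    by (auto simp: photon_def sees_def)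
qed

lemma c_of_inertial: "inertial d m \<Longrightarrow> c_of d (photon d) (sees d admissible) m = 1"
proof (rule c_of_eq_1[OF AxSymD two_le_dim])
  assume "inertial d m"
  then show "is_c d (photon d) (sees d admissible) m 1"
    using photon_separation by (auto simp: is_c_def mink_sq_def)
qed

lemma AxThExp: "AxThExp d (inertial d) (photon d) (sees d admissible)"
  unfolding AxThExp_def
proof (intro conjI allI impI)
  show "\<exists>h. inertial d h"
    using id_in_poincare inertial_def by blast
  fix m and x y :: "real list"
  assume "inertial d m \<and> length x = d \<and> length y = d \<and>
    space2 d x y < (c_of d (photon d) (sees d admissible) m)\<^sup>2 * (time x y)\<^sup>2"
  then have "inertial d m" and len: "length x = d" "length y = d"
    and "space2 d x y < (c_of d (photon d) (sees d admissible) m)\<^sup>2 * (time x y)\<^sup>2"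
    by simp_all
  then have m: "m \<in> poincare d" and "0 < mink_sq d x y"
    by (simp_all add: inertial_def c_of_inertial mink_sq_def)
  then have "0 < mink_sq d (m y) (m x)"
    using len by (simp add: mink_sq_poincare mink_sq_commute[of d y])
  then obtain k where "k \<in> poincare d" "m x \<in> worldline d k" "m y \<in> worldline d k"
    using timelike_on_observer_worldline[OF dim_pos] length_poincare[OF m] len by metis
  then show "\<exists>k. inertial d k \<and> sees d admissible m k x \<and> sees d admissible m k y"
    using admissible_poincare by (auto simp: inertial_def sees_def)
qed

lemma SR: "SR d (inertial d) (photon d) (sees d admissible)"
  unfolding SR_def using SPRplus AxLight AxEv AxSelf AxSymD by blast

end

lemma poincare_model_all_bodies: "2 \<le> d \<Longrightarrow> poincare_model d (\<lambda>_. True)"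
  by unfold_locales simp_all

lemma poincare_model_causal: "2 \<le> d \<Longrightarrow> poincare_model d (causal d)"
  by unfold_locales (simp_all add: causal_poincare_comp causal_time_axis lightlike_imp_causal)

lemma ExFTLBody_all_bodies:
  assumes "2 \<le> d"
  shows "ExFTLBody d (inertial d) (photon d) (sees d (\<lambda>_. True))"
proof -
  define b where "b = (\<lambda>z::real list. tuple d (\<lambda>i. if i = 1 then z ! 0 else 0))"
  let ?x = "b (time_axis d 0)" and ?y = "b (time_axis d 1)"
  have "space2 d ?x ?y = (\<Sum>i\<in>{1..<d}. if i = 1 then 1 else 0)"
    unfolding space2_def b_def using assms by (intro sum.cong) (simp_all add: nth_time_axis)
  also have "\<dots> = 1"
    using assms by simp
  finally have "(c_of d (photon d) (sees d (\<lambda>_. True)) (\<lambda>x. x))\<^sup>2 * (time ?x ?y)\<^sup>2 < space2 d ?x ?y"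
    using assms by (simp add: time_def b_def)
  moreover have "inertial d (\<lambda>x. x)" "length ?x = d" "length ?y = d"
    "sees d (\<lambda>_. True) (\<lambda>x. x) b ?x" "sees d (\<lambda>_. True) (\<lambda>x. x) b ?y"
    by (simp_all add: inertial_def id_in_poincare b_def sees_def worldline_def)
  ultimately show ?thesis
    unfolding ExFTLBody_def by blast
qed

lemma not_ExFTLBody_causal:
  assumes "2 \<le> d"
  shows "\<not> ExFTLBody d (inertial d) (photon d) (sees d (causal d))"
proof -
  have "space2 d x y \<le> (c_of d (photon d) (sees d (causal d)) m)\<^sup>2 * (time x y)\<^sup>2"
    if m: "inertial d m" and len: "length x = d" "length y = d"
      and sees: "sees d (causal d) m b x" "sees d (causal d) m b y" for m b x y
  proof -
    have "mink_sq d (m x) (m y) \<in> separations d (worldline d b)"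
      using sees len m by (simp add: mink_sq_in_separations length_poincare sees_def inertial_def)
    then have "0 \<le> mink_sq d (m x) (m y)"
      using sees unfolding sees_def causal_def by auto
    then have "0 \<le> mink_sq d x y"
      using m len mink_sq_poincare unfolding inertial_def by simp
    then show ?thesis
      using poincare_model.c_of_inertial[OF poincare_model_causal[OF assms] m]
      by (simp add: mink_sq_def)
  qed
  then show ?thesis
    unfolding ExFTLBody_def using leD by blast
qed

theorem theorem4p2:
  fixes d :: nat
  assumes "d \<ge> 2"
  shows "(\<exists>(IOb :: (real list \<Rightarrow> real list) \<Rightarrow> bool) Ph W.
            SR d IOb Ph W \<and> AxThExp d IOb Ph W \<and> ExFTLBody d IOb Ph W)
       \<and> (\<exists>(IOb :: (real list \<Rightarrow> real list) \<Rightarrow> bool) Ph W.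
            SR d IOb Ph W \<and> AxThExp d IOb Ph W \<and> \<not> ExFTLBody d IOb Ph W)"
proof
  interpret all_bodies: poincare_model d "\<lambda>_. True"
    using assms by (rule poincare_model_all_bodies)
  show "\<exists>(IOb :: (real list \<Rightarrow> real list) \<Rightarrow> bool) Ph W.
          SR d IOb Ph W \<and> AxThExp d IOb Ph W \<and> ExFTLBody d IOb Ph W"
    using all_bodies.SR all_bodies.AxThExp ExFTLBody_all_bodies[OF assms] by blast
next
  interpret causal_bodies: poincare_model d "causal d"
    using assms by (rule poincare_model_causal)
  show "\<exists>(IOb :: (real list \<Rightarrow> real list) \<Rightarrow> bool) Ph W.
          SR d IOb Ph W \<and> AxThExp d IOb Ph W \<and> \<not> ExFTLBody d IOb Ph W"
    using causal_bodies.SR causal_bodies.AxThExp not_ExFTLBody_causal[OF assms] by blast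
qed

end
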